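(* Let $(\mu,u)$ be a classical structure on $A$ with spiders $\Xi_n^m$, classical channel $C_\Xi$, complementary endomorphism $H$, and let $\mathrm{CNOT}:=(\Xi_2^1\otimes H)\circ(1_A\otimes H\otimes 1_A)\circ(1_A\otimes\Xi_1^2)\circ(1_A\otimes H)$. Then the morphism $$\mathrm{Bell\text{-}Meas}:=\big((C_\Xi\circ H)\otimes C_\Xi\big)\circ\mathrm{CNOT}:A\otimes A\to A\otimes A$$ is a non-degenerate destructive measurement on two systems of type $A$, i.e. it equals $(C_\Xi\otimes C_\Xi)\circ U$ for some unitary $U:A\otimes A\to A\otimes A$ in $\mathbf C^{pure}$.
   Context: Setting. $\mathbf C$ is a strict symmetric monoidal category with monoidal unit $\mathrm I$, symmetry $\sigma$, and a dagger functor $(-)^\dagger$ (identity on objects, contravariant, involutive, strict monoidal). $\mathbf C^{pure}$ is a subcategory of $\mathbf C$ with the same objects, closed under $\otimes$ and $\dagger$, containing identities, symmetries and the maps $\eta_A$ below. Every object $A$ is self-dual: there is $\eta_A:\mathrm I\to A\otimes A$ in $\mathbf C^{pure}$ with $\epsilon_A:=\eta_A^\dagger$, $(\epsilon_A\otimes 1_A)\circ(1_A\otimes\eta_A)=1_A$ and $\sigma_{A,A}\circ\eta_A=\eta_A$. A morphism $U$ is unitary if $U^\dagger\circ U=1$ and $U\circ U^\dagger=1$. Environment structure: a family of morphisms $\top_A:A\to\mathrm I$ in $\mathbf C$ such that (E1) for all objects $A,B$ and all $f,g\in\mathbf C^{pure}(A,B)$: $f^\dagger\circ f=g^\dagger\circ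 g$ if and only if $\top_B\circ f=\top_B\circ g$; (E2) $\top_{A\otimes B}=\top_A\otimes\top_B$; (E3) $(1_A\otimes\top_A)\circ\eta_A=\bot_A$, where $\bot_A:=\top_A^\dagger$. Classical structure on $A$: morphisms $\mu:A\otimes A\to A$ and $u:\mathrm I\to A$ in $\mathbf C^{pure}$, with $\delta:=\mu^\dagger$, such that $\mu$ is associative with unit $u$, $\mu\circ\sigma_{A,A}=\mu$, $(1_A\otimes\mu)\circ(\delta\otimes 1_A)=\delta\circ\mu$, $\mu\circ\delta=1_A$, and $\eta_A=\delta\circ u$. Spiders: $\mu_0:=u$, $\mu_1:=1_A$, $\mu_{k+1}:=\mu\circ(\mu_k\otimes 1_A)$, and $\Xi_n^m:=\mu_m^\dagger\circ\mu_n:A^{\otimes n}\to A^{\otimes m}$. The classical channel is $C_\Xi:=(1_A\otimes\top_A)\circ\Xi_1^2$. Complementary endomorphism: $H:A\to A$ in $\mathbf C^{pure}$ with $(H\otimes 1_A)\circ\eta_A=(1_A\otimes H)\circ\eta_A$, $H^\dagger=H$, $H$ unitary, and $\Xi_2^1\circ(H\otimes H)\circ\Xi_1^2=\Xi_0^1\circ\Xi_1^0$. A non-degenerate destructive measurement on $n$ systems of type $A$ is a morphism $(C_\Xi\otimes\cdots\otimes C_\Xi)\circ U$ with $U:A^{\otimes n}\to A^{\otimes n}$ unitary. *)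

theory Defs
  imports Main
begin

text \<open>A strict symmetric monoidal dagger category with a pure subcategory,
  chosen self-dualities and an environment structure, bundled as a record.
  Objects are all elements of type 'o; morphisms are the elements m of type 'm
  with c_arr C m.  c_comp C g f is g after f.\<close>

record ('o, 'm) env_cat =
  c_arr   :: "'m \<Rightarrow> bool"
  c_dom   :: "'m \<Rightarrow> 'o"
  c_cod   :: "'m \<Rightarrow> 'o"
  c_comp  :: "'m \<Rightarrow> 'm \<Rightarrow> 'm"
  c_id    :: "'o \<Rightarrow> 'm"
  c_otimes :: "'o \<Rightarrow> 'o \<Rightarrow> 'o"
  c_tens  :: "'m \<Rightarrow> 'm \<Rightarrow> 'm"
  c_unit  :: "'o"
  c_sym   :: "'o \<Rightarrow> 'o \<Rightarrow> 'm"
  c_dag   :: "'m \<Rightarrow> 'm"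
  c_pure  :: "'m \<Rightarrow> bool"
  c_eta   :: "'o \<Rightarrow> 'm"
  c_top   :: "'o \<Rightarrow> 'm"

definition composable :: "('o, 'm, 'z) env_cat_scheme \<Rightarrow> 'm \<Rightarrow> 'm \<Rightarrow> bool" where
  "composable C g f \<longleftrightarrow> c_arr C f \<and> c_arr C g \<and> c_dom C g = c_cod C f"

locale environment_category =
  fixes C :: "('o, 'm, 'z) env_cat_scheme"
  assumes
    id_arr: "c_arr C (c_id C a)" and
    id_dom: "c_dom C (c_id C a) = a" and
    id_cod: "c_cod C (c_id C a) = a" and
    comp_arr: "composable C g f \<Longrightarrow> c_arr C (c_comp C g f)" and
    comp_dom: "composable C g f \<Longrightarrow> c_dom C (c_comp C g f) = c_dom C f" and
    comp_cod: "composable C g f \<Longrightarrow> c_cod C (c_comp C g f) = c_cod C g" and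
    comp_id_right: "c_arr C f \<Longrightarrow> c_comp C f (c_id C (c_dom C f)) = f" and
    comp_id_left: "c_arr C f \<Longrightarrow> c_comp C (c_id C (c_cod C f)) f = f" and
    comp_assoc: "composable C g f \<Longrightarrow> composable C h g \<Longrightarrow>
        c_comp C h (c_comp C g f) = c_comp C (c_comp C h g) f" and
    tens_arr: "c_arr C f \<Longrightarrow> c_arr C g \<Longrightarrow> c_arr C (c_tens C f g)" and
    tens_dom: "c_arr C f \<Longrightarrow> c_arr C g \<Longrightarrow>
        c_dom C (c_tens C f g) = c_otimes C (c_dom C f) (c_dom C g)" and
    tens_cod: "c_arr C f \<Longrightarrow> c_arr C g \<Longrightarrow>
        c_cod C (c_tens C f g) = c_otimes C (c_cod C f) (c_cod C g)" and
    tens_id: "c_tens C (c_id C a) (c_id C b) = c_id C (c_otimes C a b)" and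
    interchange: "composable C g f \<Longrightarrow> composable C g' f' \<Longrightarrow>
        c_tens C (c_comp C g f) (c_comp C g' f') = c_comp C (c_tens C g g') (c_tens C f f')" and
    otimes_assoc: "c_otimes C (c_otimes C a b) c = c_otimes C a (c_otimes C b c)" and
    otimes_unit_left: "c_otimes C (c_unit C) a = a" and
    otimes_unit_right: "c_otimes C a (c_unit C) = a" and
    tens_assoc: "c_arr C f \<Longrightarrow> c_arr C g \<Longrightarrow> c_arr C h \<Longrightarrow>
        c_tens C (c_tens C f g) h = c_tens C f (c_tens C g h)" and
    tens_unit_left: "c_arr C f \<Longrightarrow> c_tens C (c_id C (c_unit C)) f = f" and
    tens_unit_right: "c_arr C f \<Longrightarrow> c_tens C f (c_id C (c_unit C)) = f" and
    sym_arr: "c_arr C (c_sym C a b)" and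
    sym_dom: "c_dom C (c_sym C a b) = c_otimes C a b" and
    sym_cod: "c_cod C (c_sym C a b) = c_otimes C b a" and
    sym_natural: "c_arr C f \<Longrightarrow> c_arr C g \<Longrightarrow>
        c_comp C (c_sym C (c_cod C f) (c_cod C g)) (c_tens C f g)
        = c_comp C (c_tens C g f) (c_sym C (c_dom C f) (c_dom C g))" and
    sym_inverse: "c_comp C (c_sym C b a) (c_sym C a b) = c_id C (c_otimes C a b)" and
    sym_hexagon: "c_sym C a (c_otimes C b c)
        = c_comp C (c_tens C (c_id C b) (c_sym C a c)) (c_tens C (c_sym C a b) (c_id C c))" and
    dag_arr: "c_arr C f \<Longrightarrow> c_arr C (c_dag C f)" and
    dag_dom: "c_arr C f \<Longrightarrow> c_dom C (c_dag C f) = c_cod C f" and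
    dag_cod: "c_arr C f \<Longrightarrow> c_cod C (c_dag C f) = c_dom C f" and
    dag_invol: "c_arr C f \<Longrightarrow> c_dag C (c_dag C f) = f" and
    dag_id: "c_dag C (c_id C a) = c_id C a" and
    dag_comp: "composable C g f \<Longrightarrow> c_dag C (c_comp C g f) = c_comp C (c_dag C f) (c_dag C g)" and
    dag_tens: "c_arr C f \<Longrightarrow> c_arr C g \<Longrightarrow> c_dag C (c_tens C f g) = c_tens C (c_dag C f) (c_dag C g)" and
    dag_sym: "c_dag C (c_sym C a b) = c_sym C b a" and
    pure_arr: "c_pure C f \<Longrightarrow> c_arr C f" and
    pure_id: "c_pure C (c_id C a)" and
    pure_sym: "c_pure C (c_sym C a b)" and
    pure_eta: "c_pure C (c_eta C a)" and
    pure_comp: "c_pure C f \<Longrightarrow> c_pure C g \<Longrightarrow> c_dom C g = c_cod C f \<Longrightarrow> c_pure C (c_comp C g f)" and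
    pure_tens: "c_pure C f \<Longrightarrow> c_pure C g \<Longrightarrow> c_pure C (c_tens C f g)" and
    pure_dag: "c_pure C f \<Longrightarrow> c_pure C (c_dag C f)" and
    eta_arr: "c_arr C (c_eta C a)" and
    eta_dom: "c_dom C (c_eta C a) = c_unit C" and
    eta_cod: "c_cod C (c_eta C a) = c_otimes C a a" and
    eta_snake: "c_comp C (c_tens C (c_dag C (c_eta C a)) (c_id C a))
                 (c_tens C (c_id C a) (c_eta C a)) = c_id C a" and
    eta_sym: "c_comp C (c_sym C a a) (c_eta C a) = c_eta C a" and
    top_arr: "c_arr C (c_top C a)" and
    top_dom: "c_dom C (c_top C a) = a" and
    top_cod: "c_cod C (c_top C a) = c_unit C" and
    E1: "c_pure C f \<Longrightarrow> c_pure C g \<Longrightarrow> c_dom C f = a \<Longrightarrow> c_dom C g = a \<Longrightarrow>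
        c_cod C f = b \<Longrightarrow> c_cod C g = b \<Longrightarrow>
        (c_comp C (c_dag C f) f = c_comp C (c_dag C g) g
          \<longleftrightarrow> c_comp C (c_top C b) f = c_comp C (c_top C b) g)" and
    E2: "c_top C (c_otimes C a b) = c_tens C (c_top C a) (c_top C b)" and
    E3: "c_comp C (c_tens C (c_id C a) (c_top C a)) (c_eta C a) = c_dag C (c_top C a)"

definition unitary :: "('o, 'm, 'z) env_cat_scheme \<Rightarrow> 'm \<Rightarrow> bool" where
  "unitary C U \<longleftrightarrow> c_arr C U
     \<and> c_comp C (c_dag C U) U = c_id C (c_dom C U)
     \<and> c_comp C U (c_dag C U) = c_id C (c_cod C U)"

definition classical_structure ::
    "('o, 'm, 'z) env_cat_scheme \<Rightarrow> 'o \<Rightarrow> 'm \<Rightarrow> 'm \<Rightarrow> bool" where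
  "classical_structure C A mu u \<longleftrightarrow>
     c_pure C mu \<and> c_dom C mu = c_otimes C A A \<and> c_cod C mu = A
   \<and> c_pure C u \<and> c_dom C u = c_unit C \<and> c_cod C u = A
   \<and> c_comp C mu (c_tens C mu (c_id C A)) = c_comp C mu (c_tens C (c_id C A) mu)
   \<and> c_comp C mu (c_tens C u (c_id C A)) = c_id C A
   \<and> c_comp C mu (c_tens C (c_id C A) u) = c_id C A
   \<and> c_comp C mu (c_sym C A A) = mu
   \<and> c_comp C (c_tens C (c_id C A) mu) (c_tens C (c_dag C mu) (c_id C A))
       = c_comp C (c_dag C mu) mu
   \<and> c_comp C mu (c_dag C mu) = c_id C A
   \<and> c_eta C A = c_comp C (c_dag C mu) u"

fun spider_mu :: "('o, 'm, 'z) env_cat_scheme \<Rightarrow> 'o \<Rightarrow> 'm \<Rightarrow> 'm \<Rightarrow> nat \<Rightarrow> 'm" where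
  "spider_mu C A mu u 0 = u"
| "spider_mu C A mu u (Suc 0) = c_id C A"
| "spider_mu C A mu u (Suc (Suc k)) =
     c_comp C mu (c_tens C (spider_mu C A mu u (Suc k)) (c_id C A))"

definition Xi :: "('o, 'm, 'z) env_cat_scheme \<Rightarrow> 'o \<Rightarrow> 'm \<Rightarrow> 'm \<Rightarrow> nat \<Rightarrow> nat \<Rightarrow> 'm" where
  "Xi C A mu u n m = c_comp C (c_dag C (spider_mu C A mu u m)) (spider_mu C A mu u n)"

definition classical_channel :: "('o, 'm, 'z) env_cat_scheme \<Rightarrow> 'o \<Rightarrow> 'm \<Rightarrow> 'm \<Rightarrow> 'm" where
  "classical_channel C A mu u = c_comp C (c_tens C (c_id C A) (c_top C A)) (Xi C A mu u 1 2)"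

definition complementary ::
    "('o, 'm, 'z) env_cat_scheme \<Rightarrow> 'o \<Rightarrow> 'm \<Rightarrow> 'm \<Rightarrow> 'm \<Rightarrow> bool" where
  "complementary C A mu u H \<longleftrightarrow>
     c_pure C H \<and> c_dom C H = A \<and> c_cod C H = A
   \<and> c_comp C (c_tens C H (c_id C A)) (c_eta C A) = c_comp C (c_tens C (c_id C A) H) (c_eta C A)
   \<and> c_dag C H = H
   \<and> unitary C H
   \<and> c_comp C (Xi C A mu u 2 1) (c_comp C (c_tens C H H) (Xi C A mu u 1 2))
       = c_comp C (Xi C A mu u 0 1) (Xi C A mu u 1 0)"

definition CNOT :: "('o, 'm, 'z) env_cat_scheme \<Rightarrow> 'o \<Rightarrow> 'm \<Rightarrow> 'm \<Rightarrow> 'm \<Rightarrow> 'm" where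
  "CNOT C A mu u H =
     c_comp C (c_tens C (Xi C A mu u 2 1) H)
      (c_comp C (c_tens C (c_tens C (c_id C A) H) (c_id C A))
        (c_comp C (c_tens C (c_id C A) (Xi C A mu u 1 2))
          (c_tens C (c_id C A) H)))"

definition Bell_Meas :: "('o, 'm, 'z) env_cat_scheme \<Rightarrow> 'o \<Rightarrow> 'm \<Rightarrow> 'm \<Rightarrow> 'm \<Rightarrow> 'm" where
  "Bell_Meas C A mu u H =
     c_comp C (c_tens C (c_comp C (classical_channel C A mu u) H) (classical_channel C A mu u))
       (CNOT C A mu u H)"

end

theory Submission
  imports Defs
begin

(* Writing c for the classical channel, delta for the comultiplication mu-dagger and
   CZ := (mu x 1) o (1 x H x 1) o (1 x delta) (two spiders joined by an H-edge), the
   definition of CNOT unfolds to CNOT = (1 x H) o CZ o (1 x H).  By interchange,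
     Bell-Meas = ((c o H) x c) o CNOT = (c x c) o U   with   U := (H x 1) o CNOT,
   so it suffices that U is pure and unitary.  Purity is closure of the pure subcategory;
   unitarity follows from closure of unitaries under composition and tensor once CZ is
   shown to be unitary.  That is the heart of the proof: CZ-dagger o CZ and CZ o CZ-dagger
   collapse to the identity by (co)associativity, the Frobenius law and the cup
   eta = delta o u, combined with complementarity, mu o (H x H) o delta = u o u-dagger. *)

context environment_category
begin

abbreviation comp_C (infixr "\<cdot>" 55) where "g \<cdot> f \<equiv> c_comp C g f"
abbreviation tens_C (infixr "\<otimes>" 65) where "f \<otimes> g \<equiv> c_tens C f g"
abbreviation otimes_C (infixr "\<oplus>" 65) where "a \<oplus> b \<equiv> c_otimes C a b"
abbreviation arr where "arr \<equiv> c_arr C"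
abbreviation dom where "dom \<equiv> c_dom C"
abbreviation cod where "cod \<equiv> c_cod C"
abbreviation dag where "dag \<equiv> c_dag C"

text \<open>The category axioms restated with the composability condition unfolded, so that the
  simplifier can discharge it from typing information.\<close>

lemma arr_comp [simp]: "arr f \<Longrightarrow> arr g \<Longrightarrow> dom g = cod f \<Longrightarrow> arr (g \<cdot> f)"
  using comp_arr composable_def by metis

lemma dom_comp [simp]: "arr f \<Longrightarrow> arr g \<Longrightarrow> dom g = cod f \<Longrightarrow> dom (g \<cdot> f) = dom f"
  using comp_dom composable_def by metis

lemma cod_comp [simp]: "arr f \<Longrightarrow> arr g \<Longrightarrow> dom g = cod f \<Longrightarrow> cod (g \<cdot> f) = cod g"
  using comp_cod composable_def by metis

lemma comp_assoc_typed [simp]: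
  "arr f \<Longrightarrow> arr g \<Longrightarrow> arr h \<Longrightarrow> dom g = cod f \<Longrightarrow> dom h = cod g \<Longrightarrow>
   (h \<cdot> g) \<cdot> f = h \<cdot> (g \<cdot> f)"
  using comp_assoc composable_def by metis

lemma id_left [simp]: "arr f \<Longrightarrow> cod f = a \<Longrightarrow> c_id C a \<cdot> f = f"
  using comp_id_left by blast

lemma id_right [simp]: "arr f \<Longrightarrow> dom f = a \<Longrightarrow> f \<cdot> c_id C a = f"
  using comp_id_right by blast

lemma interchange_typed:
  "arr f \<Longrightarrow> arr g \<Longrightarrow> arr f' \<Longrightarrow> arr g' \<Longrightarrow> dom g = cod f \<Longrightarrow> dom g' = cod f' \<Longrightarrow>
   (g \<cdot> f) \<otimes> (g' \<cdot> f') = (g \<otimes> g') \<cdot> (f \<otimes> f')"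
  using interchange composable_def by metis

lemma dag_comp_typed [simp]: "arr f \<Longrightarrow> arr g \<Longrightarrow> dom g = cod f \<Longrightarrow> dag (g \<cdot> f) = dag f \<cdot> dag g"
  using dag_comp composable_def by metis

text \<open>Simplifier normal form: objects and tensor products associated to the right,
  composites associated to the right, identities merged.\<close>

lemmas typing [simp] = id_arr id_dom id_cod tens_arr tens_dom tens_cod otimes_assoc
  otimes_unit_left otimes_unit_right dag_arr dag_dom dag_cod dag_invol dag_id
  eta_arr eta_dom eta_cod top_arr top_dom top_cod

declare tens_assoc [simp] dag_tens [simp] tens_id [simp]

lemma tens_id_assoc [simp]: "arr f \<Longrightarrow> c_id C a \<otimes> (c_id C b \<otimes> f) = c_id C (a \<oplus> b) \<otimes> f"
  by (metis id_arr tens_assoc tens_id)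

lemma whisker_left_comp:
  "arr f \<Longrightarrow> arr g \<Longrightarrow> dom g = cod f \<Longrightarrow> c_id C a \<otimes> (g \<cdot> f) = (c_id C a \<otimes> g) \<cdot> (c_id C a \<otimes> f)"
  using interchange_typed[of "c_id C a" "c_id C a" f g] by simp

lemma whisker_right_comp:
  "arr f \<Longrightarrow> arr g \<Longrightarrow> dom g = cod f \<Longrightarrow> (g \<cdot> f) \<otimes> c_id C a = (g \<otimes> c_id C a) \<cdot> (f \<otimes> c_id C a)"
  using interchange_typed[of f g "c_id C a" "c_id C a"] by simp

text \<open>Morphisms acting on disjoint tensor factors commute (both sides equal f x g).\<close>

lemma tens_slide:
  "arr f \<Longrightarrow> arr g \<Longrightarrow>
   (c_id C (cod f) \<otimes> g) \<cdot> (f \<otimes> c_id C (dom g)) = (f \<otimes> c_id C (cod g)) \<cdot> (c_id C (dom f) \<otimes> g)"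
  using interchange_typed[of f "c_id C (cod f)" "c_id C (dom g)" g]
        interchange_typed[of "c_id C (dom f)" f g "c_id C (cod g)"] by simp

lemma tens_state_right:
  "arr f \<Longrightarrow> arr s \<Longrightarrow> dom s = c_unit C \<Longrightarrow> (c_id C (cod f) \<otimes> s) \<cdot> f = f \<otimes> s"
  using interchange_typed[of f "c_id C (cod f)" "c_id C (c_unit C)" s] tens_unit_right[of f] by simp

lemma tens_state_left:
  "arr f \<Longrightarrow> arr s \<Longrightarrow> dom s = c_unit C \<Longrightarrow> (s \<otimes> c_id C (cod f)) \<cdot> f = s \<otimes> f"
  using interchange_typed[of "c_id C (c_unit C)" s f "c_id C (cod f)"] tens_unit_left[of f] by simp

lemma unitary_id: "unitary C (c_id C a)"
  unfolding unitary_def by simp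

lemma unitary_comp:
  assumes f: "unitary C f" and g: "unitary C g" and fg: "dom g = cod f"
  shows "unitary C (g \<cdot> f)"
proof -
  have af: "arr f" and ag: "arr g" using f g unfolding unitary_def by auto
  have "dag (g \<cdot> f) \<cdot> (g \<cdot> f) = dag f \<cdot> ((dag g \<cdot> g) \<cdot> f)" using af ag fg by simp
  also have "\<dots> = c_id C (dom (g \<cdot> f))" using f g af ag fg unfolding unitary_def by simp
  finally have left: "dag (g \<cdot> f) \<cdot> (g \<cdot> f) = c_id C (dom (g \<cdot> f))" .
  have "(g \<cdot> f) \<cdot> dag (g \<cdot> f) = g \<cdot> ((f \<cdot> dag f) \<cdot> dag g)" using af ag fg by simp
  also have "\<dots> = c_id C (cod (g \<cdot> f))" using f g af ag fg unfolding unitary_def by simp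
  finally have right: "(g \<cdot> f) \<cdot> dag (g \<cdot> f) = c_id C (cod (g \<cdot> f))" .
  show ?thesis using left right af ag fg unfolding unitary_def by simp
qed

lemma unitary_tens:
  assumes f: "unitary C f" and g: "unitary C g"
  shows "unitary C (f \<otimes> g)"
proof -
  have af: "arr f" and ag: "arr g" using f g unfolding unitary_def by auto
  have "dag (f \<otimes> g) \<cdot> (f \<otimes> g) = (dag f \<cdot> f) \<otimes> (dag g \<cdot> g)"
    using interchange_typed[of f "dag f" g "dag g"] af ag by simp
  moreover have "(f \<otimes> g) \<cdot> dag (f \<otimes> g) = (f \<cdot> dag f) \<otimes> (g \<cdot> dag g)"
    using interchange_typed[of "dag f" f "dag g" g] af ag by simp
  ultimately show ?thesis using f g af ag unfolding unitary_def by simp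
qed

end

locale classical_object = environment_category C for C :: "('o, 'm, 'z) env_cat_scheme" +
  fixes A :: 'o and mu u :: 'm
  assumes classical: "classical_structure C A mu u"
begin

abbreviation id_A ("\<one>") where "\<one> \<equiv> c_id C A"
abbreviation \<delta> where "\<delta> \<equiv> dag mu"
abbreviation \<eta> where "\<eta> \<equiv> c_eta C A"

lemma mu_typing [simp]:
  "arr mu" "dom mu = A \<oplus> A" "cod mu = A" "arr u" "dom u = c_unit C" "cod u = A"
  using classical pure_arr unfolding classical_structure_def by auto

lemma pure_mu: "c_pure C mu"
  using classical unfolding classical_structure_def by auto

lemma mu_assoc: "mu \<cdot> (mu \<otimes> \<one>) = mu \<cdot> (\<one> \<otimes> mu)"
  and mu_unit_left: "mu \<cdot> (u \<otimes> \<one>) = \<one>"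
  and mu_unit_right: "mu \<cdot> (\<one> \<otimes> u) = \<one>"
  and frobenius: "(\<one> \<otimes> mu) \<cdot> (\<delta> \<otimes> \<one>) = \<delta> \<cdot> mu"
  and cup_from_unit: "\<eta> = \<delta> \<cdot> u"
  using classical unfolding classical_structure_def by auto

lemma frobenius_mirror: "(mu \<otimes> \<one>) \<cdot> (\<one> \<otimes> \<delta>) = \<delta> \<cdot> mu"
  using arg_cong[OF frobenius, of dag] by simp

lemma delta_coassoc: "(\<delta> \<otimes> \<one>) \<cdot> \<delta> = (\<one> \<otimes> \<delta>) \<cdot> \<delta>"
  using arg_cong[OF mu_assoc, of dag] by simp

lemma delta_counit_left: "(dag u \<otimes> \<one>) \<cdot> \<delta> = \<one>"
  using arg_cong[OF mu_unit_left, of dag] by simp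

lemma delta_counit_right: "(\<one> \<otimes> dag u) \<cdot> \<delta> = \<one>"
  using arg_cong[OF mu_unit_right, of dag] by simp

lemma delta_from_cup_right: "(mu \<otimes> \<one>) \<cdot> (\<one> \<otimes> \<eta>) = \<delta>"
proof -
  have "\<one> \<otimes> \<eta> = (\<one> \<otimes> \<delta>) \<cdot> (\<one> \<otimes> u)"
    using whisker_left_comp[of u \<delta> A] cup_from_unit by simp
  then have "(mu \<otimes> \<one>) \<cdot> (\<one> \<otimes> \<eta>) = ((mu \<otimes> \<one>) \<cdot> (\<one> \<otimes> \<delta>)) \<cdot> (\<one> \<otimes> u)" by simp
  also have "\<dots> = \<delta>" by (simp add: frobenius_mirror mu_unit_right)
  finally show ?thesis .
qed

lemma delta_from_cup_left: "(\<one> \<otimes> mu) \<cdot> (\<eta> \<otimes> \<one>) = \<delta>"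
proof -
  have "\<eta> \<otimes> \<one> = (\<delta> \<otimes> \<one>) \<cdot> (u \<otimes> \<one>)"
    using whisker_right_comp[of u \<delta> A] cup_from_unit by simp
  then have "(\<one> \<otimes> mu) \<cdot> (\<eta> \<otimes> \<one>) = ((\<one> \<otimes> mu) \<cdot> (\<delta> \<otimes> \<one>)) \<cdot> (u \<otimes> \<one>)" by simp
  also have "\<dots> = \<delta>" by (simp add: frobenius mu_unit_left)
  finally show ?thesis .
qed

end

locale complementary_object = classical_object C A mu u
  for C :: "('o, 'm, 'z) env_cat_scheme" and A :: 'o and mu u :: 'm +
  fixes H :: 'm
  assumes complementary: "complementary C A mu u H"
begin

lemma H_typing [simp]: "arr H" "dom H = A" "cod H = A"
  using complementary pure_arr unfolding complementary_def by auto

lemma pure_H: "c_pure C H" and unitary_H: "unitary C H"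
  and H_self_adjoint: "dag H = H"
  and H_transpose: "(H \<otimes> \<one>) \<cdot> \<eta> = (\<one> \<otimes> H) \<cdot> \<eta>"
  using complementary unfolding complementary_def by auto

lemma complementarity: "mu \<cdot> (H \<otimes> H) \<cdot> \<delta> = u \<cdot> dag u"
proof -
  have "Xi C A mu u 2 1 \<cdot> (H \<otimes> H) \<cdot> Xi C A mu u 1 2 = Xi C A mu u 0 1 \<cdot> Xi C A mu u 1 0"
    using complementary unfolding complementary_def by auto
  then show ?thesis by (simp add: Xi_def numeral_eq_Suc)
qed

text \<open>Conjugating the comultiplication by H on one output: by the cup description of delta
  and transposition of H across the cup, H ends up on both inputs of mu.\<close>

lemma H_delta_H_right: "(\<one> \<otimes> H) \<cdot> \<delta> \<cdot> H = ((mu \<cdot> (H \<otimes> H)) \<otimes> \<one>) \<cdot> (\<one> \<otimes> \<eta>)"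
proof -
  have "(\<one> \<otimes> H) \<cdot> \<delta> \<cdot> H = (\<one> \<otimes> H) \<cdot> (mu \<otimes> \<one>) \<cdot> (\<one> \<otimes> \<eta>) \<cdot> H"
    by (simp flip: delta_from_cup_right)
  also have "\<dots> = ((\<one> \<otimes> H) \<cdot> (mu \<otimes> \<one>)) \<cdot> (H \<otimes> \<eta>)"
    using tens_state_right[of H \<eta>] by simp
  also have "\<dots> = (mu \<otimes> \<one>) \<cdot> (c_id C (A \<oplus> A) \<otimes> H) \<cdot> (H \<otimes> \<eta>)"
    using tens_slide[of mu H] by simp
  also have "(c_id C (A \<oplus> A) \<otimes> H) \<cdot> (H \<otimes> \<eta>) = H \<otimes> ((\<one> \<otimes> H) \<cdot> \<eta>)"
    using interchange_typed[of H \<one> \<eta> "\<one> \<otimes> H"] by simp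
  also have "\<dots> = H \<otimes> ((H \<otimes> \<one>) \<cdot> \<eta>)" by (simp add: H_transpose)
  also have "\<dots> = (H \<otimes> H \<otimes> \<one>) \<cdot> (\<one> \<otimes> \<eta>)"
    using interchange_typed[of \<one> H \<eta> "H \<otimes> \<one>"] by simp
  also have "(mu \<otimes> \<one>) \<cdot> (H \<otimes> H \<otimes> \<one>) \<cdot> (\<one> \<otimes> \<eta>) = ((mu \<cdot> (H \<otimes> H)) \<otimes> \<one>) \<cdot> (\<one> \<otimes> \<eta>)"
    using interchange_typed[of "H \<otimes> H" mu \<one> \<one>] by simp
  finally show ?thesis .
qed

lemma H_delta_H_left: "(H \<otimes> \<one>) \<cdot> \<delta> \<cdot> H = (\<one> \<otimes> (mu \<cdot> (H \<otimes> H))) \<cdot> (\<eta> \<otimes> \<one>)"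
proof -
  have "(H \<otimes> \<one>) \<cdot> \<delta> \<cdot> H = (H \<otimes> \<one>) \<cdot> (\<one> \<otimes> mu) \<cdot> (\<eta> \<otimes> \<one>) \<cdot> H"
    by (simp flip: delta_from_cup_left)
  also have "\<dots> = ((H \<otimes> \<one>) \<cdot> (\<one> \<otimes> mu)) \<cdot> (\<eta> \<otimes> H)"
    using tens_state_left[of H \<eta>] by simp
  also have "\<dots> = (\<one> \<otimes> mu) \<cdot> (H \<otimes> c_id C (A \<oplus> A)) \<cdot> (\<eta> \<otimes> H)"
    using arg_cong[OF tens_slide[of H mu], of "\<lambda>x. x \<cdot> (\<eta> \<otimes> H)"] by simp
  also have "(H \<otimes> c_id C (A \<oplus> A)) \<cdot> (\<eta> \<otimes> H) = ((H \<otimes> \<one>) \<cdot> \<eta>) \<otimes> H"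
    using interchange_typed[of \<eta> "H \<otimes> \<one>" H \<one>] by simp
  also have "\<dots> = ((\<one> \<otimes> H) \<cdot> \<eta>) \<otimes> H" by (simp add: H_transpose)
  also have "\<dots> = (\<one> \<otimes> H \<otimes> H) \<cdot> (\<eta> \<otimes> \<one>)"
    using interchange_typed[of \<eta> "\<one> \<otimes> H" \<one> H] by simp
  also have "(\<one> \<otimes> mu) \<cdot> (\<one> \<otimes> H \<otimes> H) \<cdot> (\<eta> \<otimes> \<one>) = (\<one> \<otimes> (mu \<cdot> (H \<otimes> H))) \<cdot> (\<eta> \<otimes> \<one>)"
    using interchange_typed[of \<one> \<one> "H \<otimes> H" mu] by simp
  finally show ?thesis .
qed

text \<open>The two "H-loops" between a spider on one wire and a spider on another collapse:
  rewrite the inner H-conjugated comultiplication by the lemmas above, slide the resulting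
  mu o (H x H) past the outer multiplication, and apply coassociativity, complementarity
  and the counit law.\<close>

lemma H_loop_left: "(\<one> \<otimes> mu) \<cdot> (\<one> \<otimes> H \<otimes> \<one>) \<cdot> (\<delta> \<otimes> \<one>) \<cdot> (H \<otimes> \<one>) \<cdot> \<delta> = u \<otimes> \<one>"
proof -
  let ?M = "mu \<cdot> (H \<otimes> H)"
  have conj: "(\<one> \<otimes> H \<otimes> \<one>) \<cdot> (\<delta> \<otimes> \<one>) \<cdot> (H \<otimes> \<one>) = (?M \<otimes> c_id C (A \<oplus> A)) \<cdot> (\<one> \<otimes> \<eta> \<otimes> \<one>)"
    using arg_cong[OF H_delta_H_right, of "\<lambda>x. x \<otimes> \<one>"] by (simp add: whisker_right_comp)
  have cup: "(c_id C (A \<oplus> A) \<otimes> mu) \<cdot> (\<one> \<otimes> \<eta> \<otimes> \<one>) = \<one> \<otimes> \<delta>"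
  proof -
    have "\<one> \<otimes> \<delta> = (\<one> \<otimes> \<one> \<otimes> mu) \<cdot> (\<one> \<otimes> \<eta> \<otimes> \<one>)"
      by (simp add: whisker_left_comp flip: delta_from_cup_left del: tens_id_assoc)
    then show ?thesis by simp
  qed
  have "(\<one> \<otimes> mu) \<cdot> (\<one> \<otimes> H \<otimes> \<one>) \<cdot> (\<delta> \<otimes> \<one>) \<cdot> (H \<otimes> \<one>) \<cdot> \<delta>
      = (\<one> \<otimes> mu) \<cdot> (((\<one> \<otimes> H \<otimes> \<one>) \<cdot> (\<delta> \<otimes> \<one>) \<cdot> (H \<otimes> \<one>)) \<cdot> \<delta>)" by simp
  also have "\<dots> = ((\<one> \<otimes> mu) \<cdot> (?M \<otimes> c_id C (A \<oplus> A))) \<cdot> (\<one> \<otimes> \<eta> \<otimes> \<one>) \<cdot> \<delta>"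
    by (simp only: conj) simp
  also have "\<dots> = (?M \<otimes> \<one>) \<cdot> ((c_id C (A \<oplus> A) \<otimes> mu) \<cdot> (\<one> \<otimes> \<eta> \<otimes> \<one>)) \<cdot> \<delta>"
    using tens_slide[of ?M mu] by simp
  also have "\<dots> = (?M \<otimes> \<one>) \<cdot> (\<delta> \<otimes> \<one>) \<cdot> \<delta>" by (simp only: cup delta_coassoc)
  also have "\<dots> = ((u \<cdot> dag u) \<otimes> \<one>) \<cdot> \<delta>"
    by (simp add: whisker_right_comp flip: complementarity)
  also have "\<dots> = u \<otimes> \<one>" by (simp add: whisker_right_comp delta_counit_left)
  finally show ?thesis .
qed

lemma H_loop_right: "(mu \<otimes> \<one>) \<cdot> (\<one> \<otimes> H \<otimes> \<one>) \<cdot> (\<one> \<otimes> \<delta>) \<cdot> (\<one> \<otimes> H) \<cdot> \<delta> = \<one> \<otimes> u"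
proof -
  let ?M = "mu \<cdot> (H \<otimes> H)"
  have conj: "(\<one> \<otimes> H \<otimes> \<one>) \<cdot> (\<one> \<otimes> \<delta>) \<cdot> (\<one> \<otimes> H) = (c_id C (A \<oplus> A) \<otimes> ?M) \<cdot> (\<one> \<otimes> \<eta> \<otimes> \<one>)"
    using arg_cong[OF H_delta_H_left, of "\<lambda>x. \<one> \<otimes> x"] by (simp add: whisker_left_comp)
  have cup: "(mu \<otimes> c_id C (A \<oplus> A)) \<cdot> (\<one> \<otimes> \<eta> \<otimes> \<one>) = \<delta> \<otimes> \<one>"
  proof -
    have "\<delta> \<otimes> \<one> = ((mu \<otimes> \<one>) \<otimes> \<one>) \<cdot> ((\<one> \<otimes> \<eta>) \<otimes> \<one>)"
      by (simp add: whisker_right_comp flip: delta_from_cup_right del: tens_assoc)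
    then show ?thesis by simp
  qed
  have "(mu \<otimes> \<one>) \<cdot> (\<one> \<otimes> H \<otimes> \<one>) \<cdot> (\<one> \<otimes> \<delta>) \<cdot> (\<one> \<otimes> H) \<cdot> \<delta>
      = (mu \<otimes> \<one>) \<cdot> (((\<one> \<otimes> H \<otimes> \<one>) \<cdot> (\<one> \<otimes> \<delta>) \<cdot> (\<one> \<otimes> H)) \<cdot> \<delta>)" by simp
  also have "\<dots> = ((mu \<otimes> \<one>) \<cdot> (c_id C (A \<oplus> A) \<otimes> ?M)) \<cdot> (\<one> \<otimes> \<eta> \<otimes> \<one>) \<cdot> \<delta>"
    by (simp only: conj) simp
  also have "\<dots> = (\<one> \<otimes> ?M) \<cdot> ((mu \<otimes> c_id C (A \<oplus> A)) \<cdot> (\<one> \<otimes> \<eta> \<otimes> \<one>)) \<cdot> \<delta>"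
    using arg_cong[OF tens_slide[of mu ?M], of "\<lambda>x. x \<cdot> (\<one> \<otimes> \<eta> \<otimes> \<one>) \<cdot> \<delta>"] by simp
  also have "\<dots> = (\<one> \<otimes> ?M) \<cdot> (\<one> \<otimes> \<delta>) \<cdot> \<delta>" by (simp only: cup delta_coassoc)
  also have "\<dots> = (\<one> \<otimes> (u \<cdot> dag u)) \<cdot> \<delta>"
    by (simp add: whisker_left_comp flip: complementarity)
  also have "\<dots> = \<one> \<otimes> u" by (simp add: whisker_left_comp delta_counit_right)
  finally show ?thesis .
qed

abbreviation CZ where "CZ \<equiv> (mu \<otimes> \<one>) \<cdot> (\<one> \<otimes> H \<otimes> \<one>) \<cdot> (\<one> \<otimes> \<delta>)"

text \<open>In both products the Frobenius law brings the two inner spiders together into an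
  H-loop, which collapses to the unit; the unit law of mu then leaves the identity.\<close>

lemma CZ_dag_CZ: "dag CZ \<cdot> CZ = c_id C (A \<oplus> A)"
proof -
  let ?I2 = "c_id C (A \<oplus> A)"
  have frob: "(\<delta> \<otimes> \<one>) \<cdot> (mu \<otimes> \<one>) = (mu \<otimes> ?I2) \<cdot> (\<one> \<otimes> \<delta> \<otimes> \<one>)"
  proof -
    have "(\<delta> \<otimes> \<one>) \<cdot> (mu \<otimes> \<one>) = ((mu \<otimes> \<one>) \<cdot> (\<one> \<otimes> \<delta>)) \<otimes> \<one>"
      by (simp add: whisker_right_comp frobenius_mirror)
    also have "\<dots> = ((mu \<otimes> \<one>) \<otimes> \<one>) \<cdot> ((\<one> \<otimes> \<delta>) \<otimes> \<one>)"
      by (simp add: whisker_right_comp del: tens_assoc)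
    finally show ?thesis by simp
  qed
  have loop: "(?I2 \<otimes> mu) \<cdot> (?I2 \<otimes> H \<otimes> \<one>) \<cdot> (\<one> \<otimes> \<delta> \<otimes> \<one>) \<cdot> (\<one> \<otimes> H \<otimes> \<one>) \<cdot> (\<one> \<otimes> \<delta>)
      = \<one> \<otimes> u \<otimes> \<one>"
    using arg_cong[OF H_loop_left, of "\<lambda>x. \<one> \<otimes> x"] by (simp add: whisker_left_comp)
  have unit: "(mu \<otimes> \<one>) \<cdot> (\<one> \<otimes> u \<otimes> \<one>) = ?I2"
    using interchange_typed[of "\<one> \<otimes> u" mu \<one> \<one>] by (simp add: mu_unit_right)
  have "dag CZ \<cdot> CZ
      = (\<one> \<otimes> mu) \<cdot> (\<one> \<otimes> H \<otimes> \<one>) \<cdot> ((\<delta> \<otimes> \<one>) \<cdot> (mu \<otimes> \<one>)) \<cdot> (\<one> \<otimes> H \<otimes> \<one>) \<cdot> (\<one> \<otimes> \<delta>)"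
    by (simp add: H_self_adjoint)
  also have "\<dots> = (\<one> \<otimes> mu) \<cdot> ((\<one> \<otimes> H \<otimes> \<one>) \<cdot> (mu \<otimes> ?I2)) \<cdot> (\<one> \<otimes> \<delta> \<otimes> \<one>) \<cdot> (\<one> \<otimes> H \<otimes> \<one>) \<cdot> (\<one> \<otimes> \<delta>)"
    by (simp only: frob) simp
  also have "\<dots> = ((\<one> \<otimes> mu) \<cdot> (mu \<otimes> ?I2)) \<cdot> (?I2 \<otimes> H \<otimes> \<one>) \<cdot> (\<one> \<otimes> \<delta> \<otimes> \<one>) \<cdot> (\<one> \<otimes> H \<otimes> \<one>) \<cdot> (\<one> \<otimes> \<delta>)"
    using tens_slide[of mu "H \<otimes> \<one>"] by simp
  also have "\<dots> = (mu \<otimes> \<one>) \<cdot> (?I2 \<otimes> mu) \<cdot> (?I2 \<otimes> H \<otimes> \<one>) \<cdot> (\<one> \<otimes> \<delta> \<otimes> \<one>) \<cdot> (\<one> \<otimes> H \<otimes> \<one>) \<cdot> (\<one> \<otimes> \<delta>)"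
    using tens_slide[of mu mu] by simp
  also have "\<dots> = ?I2" by (simp only: loop unit)
  finally show ?thesis .
qed

lemma CZ_CZ_dag: "CZ \<cdot> dag CZ = c_id C (A \<oplus> A)"
proof -
  let ?I2 = "c_id C (A \<oplus> A)"
  have frob: "(\<one> \<otimes> \<delta>) \<cdot> (\<one> \<otimes> mu) = (?I2 \<otimes> mu) \<cdot> (\<one> \<otimes> \<delta> \<otimes> \<one>)"
  proof -
    have "(\<one> \<otimes> \<delta>) \<cdot> (\<one> \<otimes> mu) = \<one> \<otimes> ((\<one> \<otimes> mu) \<cdot> (\<delta> \<otimes> \<one>))"
      by (simp add: whisker_left_comp frobenius)
    also have "\<dots> = (\<one> \<otimes> (\<one> \<otimes> mu)) \<cdot> (\<one> \<otimes> (\<delta> \<otimes> \<one>))"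
      by (simp add: whisker_left_comp del: tens_id_assoc)
    finally show ?thesis by simp
  qed
  have loop: "(mu \<otimes> ?I2) \<cdot> (\<one> \<otimes> H \<otimes> ?I2) \<cdot> (\<one> \<otimes> \<delta> \<otimes> \<one>) \<cdot> (\<one> \<otimes> H \<otimes> \<one>) \<cdot> (\<delta> \<otimes> \<one>)
      = \<one> \<otimes> u \<otimes> \<one>"
    using arg_cong[OF H_loop_right, of "\<lambda>x. x \<otimes> \<one>"] by (simp add: whisker_right_comp)
  have unit: "(\<one> \<otimes> mu) \<cdot> (\<one> \<otimes> u \<otimes> \<one>) = ?I2"
    using interchange_typed[of \<one> \<one> "u \<otimes> \<one>" mu] by (simp add: mu_unit_left)
  have "CZ \<cdot> dag CZ
      = (mu \<otimes> \<one>) \<cdot> (\<one> \<otimes> H \<otimes> \<one>) \<cdot> ((\<one> \<otimes> \<delta>) \<cdot> (\<one> \<otimes> mu)) \<cdot> (\<one> \<otimes> H \<otimes> \<one>) \<cdot> (\<delta> \<otimes> \<one>)"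
    by (simp add: H_self_adjoint)
  also have "\<dots> = (mu \<otimes> \<one>) \<cdot> ((\<one> \<otimes> H \<otimes> \<one>) \<cdot> (?I2 \<otimes> mu)) \<cdot> (\<one> \<otimes> \<delta> \<otimes> \<one>) \<cdot> (\<one> \<otimes> H \<otimes> \<one>) \<cdot> (\<delta> \<otimes> \<one>)"
    by (simp only: frob) simp
  also have "\<dots> = ((mu \<otimes> \<one>) \<cdot> (?I2 \<otimes> mu)) \<cdot> (\<one> \<otimes> H \<otimes> ?I2) \<cdot> (\<one> \<otimes> \<delta> \<otimes> \<one>) \<cdot> (\<one> \<otimes> H \<otimes> \<one>) \<cdot> (\<delta> \<otimes> \<one>)"
    using arg_cong[OF tens_slide[of "\<one> \<otimes> H" mu, symmetric],
        of "\<lambda>x. (mu \<otimes> \<one>) \<cdot> x \<cdot> (\<one> \<otimes> \<delta> \<otimes> \<one>) \<cdot> (\<one> \<otimes> H \<otimes> \<one>) \<cdot> (\<delta> \<otimes> \<one>)"]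
    by simp
  also have "\<dots> = (\<one> \<otimes> mu) \<cdot> (mu \<otimes> ?I2) \<cdot> (\<one> \<otimes> H \<otimes> ?I2) \<cdot> (\<one> \<otimes> \<delta> \<otimes> \<one>) \<cdot> (\<one> \<otimes> H \<otimes> \<one>) \<cdot> (\<delta> \<otimes> \<one>)"
    using arg_cong[OF tens_slide[of mu mu, symmetric],
        of "\<lambda>x. x \<cdot> (\<one> \<otimes> H \<otimes> ?I2) \<cdot> (\<one> \<otimes> \<delta> \<otimes> \<one>) \<cdot> (\<one> \<otimes> H \<otimes> \<one>) \<cdot> (\<delta> \<otimes> \<one>)"]
    by simp
  also have "\<dots> = ?I2" by (simp only: loop unit)
  finally show ?thesis .
qed

lemma unitary_CZ: "unitary C CZ"
  unfolding unitary_def using CZ_dag_CZ CZ_CZ_dag by simp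

lemma CNOT_via_CZ: "CNOT C A mu u H = (\<one> \<otimes> H) \<cdot> CZ \<cdot> (\<one> \<otimes> H)"
proof -
  have "mu \<otimes> H = (\<one> \<otimes> H) \<cdot> (mu \<otimes> \<one>)"
    using interchange_typed[of mu \<one> \<one> H] by simp
  then show ?thesis unfolding CNOT_def by (simp add: Xi_def numeral_eq_Suc)
qed

lemma Bell_Meas_factor:
  "Bell_Meas C A mu u H
     = (classical_channel C A mu u \<otimes> classical_channel C A mu u) \<cdot> (H \<otimes> \<one>) \<cdot> CNOT C A mu u H"
proof -
  let ?c = "classical_channel C A mu u"
  have channel_eq: "?c = (\<one> \<otimes> c_top C A) \<cdot> \<delta>"
    unfolding classical_channel_def by (simp add: Xi_def numeral_eq_Suc)
  have "(?c \<cdot> H) \<otimes> ?c = (?c \<otimes> ?c) \<cdot> (H \<otimes> \<one>)"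
    using interchange_typed[of H ?c \<one> ?c] by (simp add: channel_eq)
  then show ?thesis
    unfolding Bell_Meas_def CNOT_via_CZ by (simp add: channel_eq)
qed

end

theorem mainTheorem5:
  fixes C :: "('o, 'm, 'z) env_cat_scheme" and A :: 'o and mu u H :: 'm
  assumes "environment_category C"
    and "classical_structure C A mu u"
    and "complementary C A mu u H"
  shows "\<exists>U. c_pure C U \<and> c_dom C U = c_otimes C A A \<and> c_cod C U = c_otimes C A A
           \<and> unitary C U
           \<and> Bell_Meas C A mu u H
               = c_comp C (c_tens C (classical_channel C A mu u) (classical_channel C A mu u)) U"
proof -
  interpret complementary_object C A mu u H
    using assms by (simp add: complementary_object_def complementary_object_axioms_def
        classical_object_def classical_object_axioms_def)
  let ?U = "(H \<otimes> \<one>) \<cdot> CNOT C A mu u H"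
  have "unitary C ?U"
    unfolding CNOT_via_CZ
    by (intro unitary_comp unitary_tens unitary_CZ unitary_H unitary_id) auto
  moreover have "c_pure C ?U"
    unfolding CNOT_via_CZ using pure_mu pure_H pure_id pure_tens pure_dag by (simp add: pure_comp)
  moreover have "dom ?U = A \<oplus> A" "cod ?U = A \<oplus> A"
    unfolding CNOT_via_CZ by simp_all
  ultimately show ?thesis using Bell_Meas_factor by blast
qed

end
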